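(* For every term $t\in\Lambda^\infty$ there exists $s\in\Lambda^\infty$ with $t\to^\infty_N s$.
   Context: Fix an infinite set $V$ of variables and a set $C$ of constants with $V\cap C=\emptyset$, containing a distinguished constant $\bot$. $\Lambda^\infty$ is the set of infinitary lambda-terms: all finite and infinite terms generated coinductively by $t ::= c\mid x\mid t\,t\mid\lambda x.t$, identified up to $\alpha$-equivalence; $s[t/x]$ is capture-avoiding substitution; $\equiv$ is identity; an atom is a variable or constant. $\to_\beta$ is the compatible closure of $\{((\lambda x.s)t,s[t/x])\}$ (least relation containing these pairs and closed under $s\to s'\Rightarrow st\to s't, ts\to ts', \lambda x.s\to\lambda x.s'$), $\to^*_\beta$ its reflexive-transitive closure. A term is in head normal form (hnf) if it is $\lambda x_1\ldots x_m.\,a\,t_1\ldots t_n$ ($m,n\ge0$, $a$ an atom, $a\not\equiv\bot$); $t$ has a hnf if $t\to^*_\beta t'$ for some $t'$ in hnf. Weak head contraction $\to_w$ is the least relation with $(\lambda x.s)t\to_w s[t/x]$ and $s\to_w s'\Rightarrow st\to_w s't$; head contraction $\to_h$ is the least relation with $s\to_w s'\Rightarrow s\to_h s'$ and $s\to_h s'\Rightarrow\lambda x.s\to_h\lambda x.s'$; $\to^*_h$ is its reflexive-transitive closure. The relation $\to^\infty_N$ is the greatest relation such that whenever $t\to^\infty_N u$, either (i) $u\equiv\bot$ and $t$ has no hnf, or (ii) $u\equiv\lambda x_1\ldots x_n.\,a\,t_1'\ldots t_m'$ with $a$ an atom, $a\not\equiv\bot$, and there are $t_1,\ldots,t_m$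 with $t\to^*_h\lambda x_1\ldots x_n.\,a\,t_1\ldots t_m$ and $t_i\to^\infty_N t_i'$ for $i=1,\ldots,m$. *)

theory Defs
  imports Main
begin

text \<open>Infinitary lambda terms, nameless (de Bruijn) representation, which
identifies terms up to alpha-equivalence. Variables are indices in nat
(Var i under d binders with i >= d is the (i-d)-th free variable);
constants range over the type 'c, with a distinguished constant bt (the paper's bottom).\<close>

codatatype 'c trm = Var nat | Cst 'c | App "'c trm" "'c trm" | Lam "'c trm"

primcorec lift :: "nat \<Rightarrow> nat \<Rightarrow> 'c trm \<Rightarrow> 'c trm" where
  "lift k c t = (case t of
      Var i \<Rightarrow> Var (if i < c then i else i + k)
    | Cst a \<Rightarrow> Cst a
    | App s u \<Rightarrow> App (lift k c s) (lift k c u)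
    | Lam s \<Rightarrow> Lam (lift k (Suc c) s))"

primcorec subst :: "nat \<Rightarrow> 'c trm \<Rightarrow> 'c trm \<Rightarrow> 'c trm" where
  "subst k u s = (case s of
      Var i \<Rightarrow> (if i < k then Var i else if i = k then lift k 0 u else Var (i - 1))
    | Cst a \<Rightarrow> Cst a
    | App s1 s2 \<Rightarrow> App (subst k u s1) (subst k u s2)
    | Lam s1 \<Rightarrow> Lam (subst (Suc k) u s1))"

inductive beta :: "'c trm \<Rightarrow> 'c trm \<Rightarrow> bool" where
  beta_rule: "beta (App (Lam s) t) (subst 0 t s)"
| beta_appL: "beta s s' \<Longrightarrow> beta (App s t) (App s' t)"
| beta_appR: "beta s s' \<Longrightarrow> beta (App t s) (App t s')"
| beta_lam: "beta s s' \<Longrightarrow> beta (Lam s) (Lam s')"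

definition is_atom :: "'c trm \<Rightarrow> bool" where
  "is_atom a \<longleftrightarrow> (\<exists>i. a = Var i) \<or> (\<exists>c. a = Cst c)"

definition lams :: "nat \<Rightarrow> 'c trm \<Rightarrow> 'c trm" where
  "lams n s = (Lam ^^ n) s"

definition apps :: "'c trm \<Rightarrow> 'c trm list \<Rightarrow> 'c trm" where
  "apps a ts = foldl App a ts"

definition is_hnf :: "'c \<Rightarrow> 'c trm \<Rightarrow> bool" where
  "is_hnf bt t \<longleftrightarrow> (\<exists>n a ts. is_atom a \<and> a \<noteq> Cst bt \<and> t = lams n (apps a ts))"

definition has_hnf :: "'c \<Rightarrow> 'c trm \<Rightarrow> bool" where
  "has_hnf bt t \<longleftrightarrow> (\<exists>t'. beta\<^sup>*\<^sup>* t t' \<and> is_hnf bt t')"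

inductive whead :: "'c trm \<Rightarrow> 'c trm \<Rightarrow> bool" where
  "whead (App (Lam s) t) (subst 0 t s)"
| "whead s s' \<Longrightarrow> whead (App s t) (App s' t)"

inductive head :: "'c trm \<Rightarrow> 'c trm \<Rightarrow> bool" where
  "whead s s' \<Longrightarrow> head s s'"
| "head s s' \<Longrightarrow> head (Lam s) (Lam s')"

coinductive infN :: "'c \<Rightarrow> 'c trm \<Rightarrow> 'c trm \<Rightarrow> bool" for bt :: 'c where
  infN_bot: "\<not> has_hnf bt t \<Longrightarrow> infN bt t (Cst bt)"
| infN_hnf: "is_atom a \<Longrightarrow> a \<noteq> Cst bt \<Longrightarrow> head\<^sup>*\<^sup>* t (lams n (apps a ts)) \<Longrightarrow>
    list_all2 (infN bt) ts ts' \<Longrightarrow> infN bt t (lams n (apps a ts'))"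

end

theory Submission
  imports Defs
begin

text \<open>Read off a tree from t by head-reducing it to a head normal form
\<lambda>x1...xn. a t1 ... tm when it has one, emitting \<lambda>x1...xn. a and continuing corecursively
on the ti, and emitting \<bottom> otherwise. That t ->N-infinity this tree is a direct coinduction,
provided head reduction finds a head normal form of every term that has one, i.e. one reachable
by arbitrary \<beta>-steps.

This standardisation fact is proved with parallel reduction: by induction on k, if t \<Rightarrow> t' and
t' reaches a weak head normal form within k weak head steps, then t reaches by weak head steps
one of the same shape whose components parallel-reduce to those of t'. The step bound is what
the induction needs when the head redex of t' is contracted; the inner induction on t \<Rightarrow> t' is
generalised over simultaneous substitutions so that the contracted argument can be absorbed
into them. For infinite terms there is one extra case: a term with an infinite left spine has no
weak head redex and is not a weak head normal form, so for it the claim is vacuous.\<close>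

section \<open>Simultaneous substitution\<close>

lemma lift_simps [simp]:
  "lift k c (Var i) = Var (if i < c then i else i + k)" "lift k c (Cst a) = Cst a"
  "lift k c (App s u) = App (lift k c s) (lift k c u)" "lift k c (Lam s) = Lam (lift k (Suc c) s)"
  by (subst lift.code; simp)+

definition up :: "(nat \<Rightarrow> 'c trm) \<Rightarrow> nat \<Rightarrow> 'c trm" where
  "up \<sigma> i = (case i of 0 \<Rightarrow> Var 0 | Suc j \<Rightarrow> lift 1 0 (\<sigma> j))"

primcorec ssub :: "(nat \<Rightarrow> 'c trm) \<Rightarrow> 'c trm \<Rightarrow> 'c trm" where
  "ssub \<sigma> t = (case t of Var i \<Rightarrow> \<sigma> i | Cst a \<Rightarrow> Cst a
     | App s u \<Rightarrow> App (ssub \<sigma> s) (ssub \<sigma> u) | Lam s \<Rightarrow> Lam (ssub (up \<sigma>) s))"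

lemma ssub_simps [simp]:
  "ssub \<sigma> (Var i) = \<sigma> i" "ssub \<sigma> (Cst a) = Cst a"
  "ssub \<sigma> (App s u) = App (ssub \<sigma> s) (ssub \<sigma> u)" "ssub \<sigma> (Lam s) = Lam (ssub (up \<sigma>) s)"
  by (subst ssub.code; simp)+

lemma trm_coinduct_upto_eq:
  assumes "R a b"
    and "\<And>a b. R a b \<Longrightarrow> a = b
      \<or> (\<exists>x y x' y'. a = App x y \<and> b = App x' y' \<and> (R x x' \<or> x = x') \<and> (R y y' \<or> y = y'))
      \<or> (\<exists>x x'. a = Lam x \<and> b = Lam x' \<and> (R x x' \<or> x = x'))"
  shows "a = b"
  using assms(1) by (rule trm.coinduct_strong) (use assms(2) in fastforce)

lemma ssub_unique:
  fixes F :: "nat \<Rightarrow> 'c trm \<Rightarrow> 'c trm"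
  assumes "\<And>c i. F c (Var i) = \<sigma> c i" "\<And>c a. F c (Cst a) = Cst a"
    "\<And>c s u. F c (App s u) = App (F c s) (F c u)" "\<And>c s. F c (Lam s) = Lam (F (Suc c) s)"
    "\<And>c. up (\<sigma> c) = \<sigma> (Suc c)"
  shows "F c t = ssub (\<sigma> c) t"
proof (rule trm_coinduct_upto_eq[where R = "\<lambda>a b. \<exists>c t. a = F c t \<and> b = ssub (\<sigma> c) t"],
    blast, goal_cases)
  case (1 a b)
  then obtain c t where "a = F c t" "b = ssub (\<sigma> c) t" by blast
  then show ?case by (cases t) (auto simp: assms)
qed

lemma ssub_ssub_invariant:
  assumes "P \<sigma> \<tau> \<theta>"
    and "\<And>\<sigma> \<tau> \<theta>. P \<sigma> \<tau> \<theta> \<Longrightarrow> (\<forall>i. ssub \<tau> (\<sigma> i) = \<theta> i) \<and> P (up \<sigma>) (up \<tau>) (up \<theta>)"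
  shows "ssub \<tau> (ssub \<sigma> t) = ssub \<theta> t"
proof (rule trm_coinduct_upto_eq[where
      R = "\<lambda>a b. \<exists>\<sigma> \<tau> \<theta> t. P \<sigma> \<tau> \<theta> \<and> a = ssub \<tau> (ssub \<sigma> t) \<and> b = ssub \<theta> t"],
    use assms(1) in blast, goal_cases)
  case (1 a b)
  then obtain \<sigma> \<tau> \<theta> t where "P \<sigma> \<tau> \<theta>" "a = ssub \<tau> (ssub \<sigma> t)" "b = ssub \<theta> t" by blast
  then show ?case by (cases t) (auto dest: assms(2))
qed

lemma ssub_Var: "ssub Var t = t"
  by (rule sym, rule ssub_unique[where F = "\<lambda>_ t. t" and \<sigma> = "\<lambda>_. Var"])
    (auto simp: up_def fun_eq_iff split: nat.split)

lemma lift_eq_ssub: "lift k c t = ssub (\<lambda>i. Var (if i < c then i else i + k)) t"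
  by (rule ssub_unique[where F = "\<lambda>c. lift k c" and \<sigma> = "\<lambda>c i. Var (if i < c then i else i + k)"])
    (auto simp: up_def fun_eq_iff split: nat.split)

lemma up_0 [simp]: "up \<sigma> 0 = Var 0"
  and up_Suc [simp]: "up \<sigma> (Suc i) = ssub (\<lambda>j. Var (Suc j)) (\<sigma> i)"
  by (simp_all add: up_def lift_eq_ssub)

lemma lift_0: "lift 0 c t = t"
  by (simp add: lift_eq_ssub ssub_Var cong: if_cong)

lemma ssub_ren_ssub: "ssub \<tau> (ssub (\<lambda>i. Var (f i)) t) = ssub (\<lambda>i. \<tau> (f i)) t"
proof (rule ssub_ssub_invariant[where P = "\<lambda>\<sigma> \<tau> \<theta>. \<exists>f. \<sigma> = (\<lambda>i. Var (f i)) \<and> \<theta> = (\<lambda>i. \<tau> (f i))"])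
  fix \<sigma> \<tau> \<theta> :: "nat \<Rightarrow> 'c trm"
  assume "\<exists>f. \<sigma> = (\<lambda>i. Var (f i)) \<and> \<theta> = (\<lambda>i. \<tau> (f i))"
  then obtain f where f: "\<sigma> = (\<lambda>i. Var (f i))" "\<theta> = (\<lambda>i. \<tau> (f i))" by blast
  define f' where "f' i = (case i of 0 \<Rightarrow> 0 | Suc j \<Rightarrow> Suc (f j))" for i
  have "up \<sigma> = (\<lambda>i. Var (f' i))" "up \<theta> = (\<lambda>i. up \<tau> (f' i))"
    by (auto simp: f f'_def fun_eq_iff split: nat.split)
  then show "(\<forall>i. ssub \<tau> (\<sigma> i) = \<theta> i) \<and> (\<exists>f. up \<sigma> = (\<lambda>i. Var (f i)) \<and> up \<theta> = (\<lambda>i. up \<tau> (f i)))"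
    using f by auto
qed auto

lemma ssub_ssub_ren: "ssub (\<lambda>i. Var (f i)) (ssub \<sigma> t) = ssub (\<lambda>i. ssub (\<lambda>j. Var (f j)) (\<sigma> i)) t"
proof (rule ssub_ssub_invariant[where
      P = "\<lambda>\<sigma> \<tau> \<theta>. \<exists>f. \<tau> = (\<lambda>i. Var (f i)) \<and> \<theta> = (\<lambda>i. ssub (\<lambda>j. Var (f j)) (\<sigma> i))"])
  fix \<sigma> \<tau> \<theta> :: "nat \<Rightarrow> 'c trm"
  assume "\<exists>f. \<tau> = (\<lambda>i. Var (f i)) \<and> \<theta> = (\<lambda>i. ssub (\<lambda>j. Var (f j)) (\<sigma> i))"
  then obtain f where f: "\<tau> = (\<lambda>i. Var (f i))" "\<theta> = (\<lambda>i. ssub (\<lambda>j. Var (f j)) (\<sigma> i))" by blast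
  define f' where "f' i = (case i of 0 \<Rightarrow> 0 | Suc j \<Rightarrow> Suc (f j))" for i
  have "up \<tau> = (\<lambda>i. Var (f' i))"
    by (auto simp: f f'_def fun_eq_iff split: nat.split)
  moreover have "up \<theta> = (\<lambda>i. ssub (\<lambda>j. Var (f' j)) (up \<sigma> i))"
  proof
    show "up \<theta> i = ssub (\<lambda>j. Var (f' j)) (up \<sigma> i)" for i
      by (cases i) (simp_all add: f f'_def ssub_ren_ssub)
  qed
  ultimately show "(\<forall>i. ssub \<tau> (\<sigma> i) = \<theta> i) \<and>
      (\<exists>f. up \<tau> = (\<lambda>i. Var (f i)) \<and> up \<theta> = (\<lambda>i. ssub (\<lambda>j. Var (f j)) (up \<sigma> i)))"
    using f by auto
qed auto

lemma ssub_ssub: "ssub \<tau> (ssub \<sigma> t) = ssub (\<lambda>i. ssub \<tau> (\<sigma> i)) t"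
proof (rule ssub_ssub_invariant[where P = "\<lambda>\<sigma> \<tau> \<theta>. \<theta> = (\<lambda>i. ssub \<tau> (\<sigma> i))"])
  fix \<sigma> \<tau> \<theta> :: "nat \<Rightarrow> 'c trm"
  assume \<theta>: "\<theta> = (\<lambda>i. ssub \<tau> (\<sigma> i))"
  have "up \<theta> = (\<lambda>i. ssub (up \<tau>) (up \<sigma> i))"
  proof
    show "up \<theta> i = ssub (up \<tau>) (up \<sigma> i)" for i
      by (cases i) (simp_all add: \<theta> ssub_ren_ssub ssub_ssub_ren)
  qed
  then show "(\<forall>i. ssub \<tau> (\<sigma> i) = \<theta> i) \<and> up \<theta> = (\<lambda>i. ssub (up \<tau>) (up \<sigma> i))"
    using \<theta> by simp
qed simp

lemma subst_simps [simp]: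
  "subst k u (Var i) = (if i < k then Var i else if i = k then lift k 0 u else Var (i - 1))"
  "subst k u (Cst a) = Cst a"
  "subst k u (App s1 s2) = App (subst k u s1) (subst k u s2)"
  "subst k u (Lam s) = Lam (subst (Suc k) u s)"
  by (subst subst.code; simp)+

lemma subst_eq_ssub:
  "subst k u s = ssub (\<lambda>i. if i < k then Var i else if i = k then lift k 0 u else Var (i - 1)) s"
proof (rule ssub_unique[where F = "\<lambda>k. subst k u"])
  show "up (\<lambda>i. if i < k then Var i else if i = k then lift k 0 u else Var (i - 1)) =
      (\<lambda>i. if i < Suc k then Var i else if i = Suc k then lift (Suc k) 0 u else Var (i - 1))" for k
  proof
    fix i show "up (\<lambda>i. if i < k then Var i else if i = k then lift k 0 u else Var (i - 1)) i =
        (if i < Suc k then Var i else if i = Suc k then lift (Suc k) 0 u else Var (i - 1))"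
      by (cases i) (auto simp: lift_eq_ssub ssub_ren_ssub)
  qed
qed simp_all

definition scons :: "'c trm \<Rightarrow> (nat \<Rightarrow> 'c trm) \<Rightarrow> nat \<Rightarrow> 'c trm" where
  "scons u \<sigma> i = (case i of 0 \<Rightarrow> u | Suc j \<Rightarrow> \<sigma> j)"

lemma subst_0_eq_ssub: "subst 0 u s = ssub (scons u Var) s"
  unfolding subst_eq_ssub
  by (rule arg_cong[where f = "\<lambda>\<sigma>. ssub \<sigma> s"])
    (simp add: lift_0 scons_def fun_eq_iff split: nat.split)

lemma subst_0_ssub_up: "subst 0 u (ssub (up \<sigma>) s) = ssub (scons u \<sigma>) s"
  unfolding subst_0_eq_ssub ssub_ssub
  by (rule arg_cong[where f = "\<lambda>\<sigma>. ssub \<sigma> s"])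
    (simp add: ssub_ren_ssub ssub_Var scons_def fun_eq_iff split: nat.split)

lemma ssub_subst_0: "ssub \<sigma> (subst 0 u s) = ssub (scons (ssub \<sigma> u) \<sigma>) s"
  unfolding subst_0_eq_ssub ssub_ssub
  by (rule arg_cong[where f = "\<lambda>\<sigma>. ssub \<sigma> s"]) (simp add: scons_def fun_eq_iff split: nat.split)

lemma apps_Nil [simp]: "apps a [] = a"
  and apps_snoc [simp]: "apps a (ts @ [u]) = App (apps a ts) u"
  and apps_Cons: "apps a (u # ts) = apps (App a u) ts"
  and apps_apps: "apps (apps a xs) ys = apps a (xs @ ys)"
  by (simp_all add: apps_def)

lemma apps_Cons_neq_Lam [simp]: "apps v (u # us) \<noteq> Lam p"
  by (induction us arbitrary: v u) (simp_all add: apps_Cons)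

lemma apps_atom_neq_Lam: "is_atom a \<Longrightarrow> apps a ts \<noteq> Lam p"
  by (cases ts) (auto simp: is_atom_def)

lemma apps_atom_eq_appsD:
  "is_atom a \<Longrightarrow> apps a ts = apps v us \<Longrightarrow> \<exists>vs. v = apps a vs \<and> ts = vs @ us"
proof (induction us arbitrary: ts rule: rev_induct)
  case (snoc u us)
  then show ?case
    by (cases ts rule: rev_exhaust) (auto simp: is_atom_def)
qed simp

lemma ssub_apps: "ssub \<sigma> (apps v us) = apps (ssub \<sigma> v) (map (ssub \<sigma>) us)"
  by (induction us rule: rev_induct) simp_all

lemma lams_0 [simp]: "lams 0 t = t"
  and lams_Suc [simp]: "lams (Suc n) t = Lam (lams n t)"
  by (simp_all add: lams_def)

lemma not_whead_Lam: "\<not> whead (Lam p) x"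
  by (auto elim: whead.cases)

lemma not_whead_apps_atom: "is_atom a \<Longrightarrow> \<not> whead (apps a ts) x"
proof (induction ts arbitrary: x rule: rev_induct)
  case Nil
  then show ?case by (auto simp: is_atom_def elim: whead.cases)
next
  case (snoc t ts)
  then show ?case
    using apps_atom_neq_Lam[OF snoc.prems] by (auto elim: whead.cases)
qed

lemma relpowp_whead_normal: "(whead ^^ j) x y \<Longrightarrow> (\<And>z. \<not> whead x z) \<Longrightarrow> y = x"
  by (cases j) (simp, metis relpowp_Suc_D2)

lemma whead_apps: "whead x y \<Longrightarrow> whead (apps x us) (apps y us)"
  by (induction us arbitrary: x y) (auto simp: apps_Cons intro: whead.intros)

lemma wheads_apps: "whead\<^sup>*\<^sup>* x y \<Longrightarrow> whead\<^sup>*\<^sup>* (apps x us) (apps y us)"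
  by (induction rule: rtranclp_induct) (auto intro: rtranclp.rtrancl_into_rtrancl whead_apps)

lemma whead_apps_Cons_cases:
  assumes "whead (apps v (u # us)) x"
  shows "(\<exists>p. v = Lam p \<and> x = apps (subst 0 u p) us) \<or> (\<exists>v'. whead v v' \<and> x = apps v' (u # us))"
  using assms
proof (induction us arbitrary: x rule: rev_induct)
  case Nil
  then show ?case by (auto simp: apps_Cons elim: whead.cases)
next
  case (snoc w us)
  from snoc.prems have "whead (App (apps v (u # us)) w) x"
    by (simp flip: append_Cons)
  then show ?case
  proof (cases rule: whead.cases)
    case (2 y)
    with snoc.IH show ?thesis by (auto simp flip: append_Cons)
  qed simp
qed

lemma relpowp_whead_apps_cases:
  assumes "(whead ^^ j) (apps v us) t"
  shows "(\<exists>t0. (whead ^^ j) v t0 \<and> t = apps t0 us) \<or>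
    (\<exists>i p u us'. i < j \<and> us = u # us' \<and> (whead ^^ i) v (Lam p) \<and>
       (whead ^^ (j - i - 1)) (apps (subst 0 u p) us') t)"
  using assms
proof (induction j arbitrary: v)
  case (Suc j)
  from relpowp_Suc_D2[OF Suc.prems] obtain x where x: "whead (apps v us) x" "(whead ^^ j) x t"
    by blast
  show ?case
  proof (cases us)
    case Nil
    with x show ?thesis by (simp del: relpowp.simps) (blast intro: relpowp_Suc_I2)
  next
    case (Cons u us')
    from whead_apps_Cons_cases[OF x(1)[unfolded Cons]] show ?thesis
    proof (elim disjE exE conjE)
      fix p assume "v = Lam p" "x = apps (subst 0 u p) us'"
      with x(2) Cons show ?thesis by (intro disjI2 exI[of _ 0]) auto
    next
      fix v' assume v': "whead v v'" "x = apps v' (u # us')"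
      with x(2) Cons have "(whead ^^ j) (apps v' us) t" by simp
      from Suc.IH[OF this] show ?thesis
      proof (elim disjE exE conjE)
        fix t0 assume "(whead ^^ j) v' t0" "t = apps t0 us"
        with v'(1) show ?thesis by (blast intro: relpowp_Suc_I2)
      next
        fix i p w ws assume "i < j" "us = w # ws" "(whead ^^ i) v' (Lam p)"
          "(whead ^^ (j - i - 1)) (apps (subst 0 w p) ws) t"
        moreover from v'(1) \<open>(whead ^^ i) v' (Lam p)\<close> have "(whead ^^ Suc i) v (Lam p)"
          by (rule relpowp_Suc_I2)
        ultimately show ?thesis by (intro disjI2 exI[of _ "Suc i"]) auto
      qed
    qed
  qed
qed simp

text \<open>An infinite left spine App (App (App \<dots>) _) _ is neither a weak head redex nor a
  weak head normal form.\<close>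

inductive finite_spine :: "'c trm \<Rightarrow> bool" where
  "(\<And>x y. t \<noteq> App x y) \<Longrightarrow> finite_spine t"
| "finite_spine x \<Longrightarrow> finite_spine (App x y)"

lemma finite_spine_imp_apps:
  "finite_spine t \<Longrightarrow> \<exists>h us. t = apps h us \<and> (\<forall>x y. h \<noteq> App x y)"
proof (induction rule: finite_spine.induct)
  case (1 t)
  then show ?case by (intro exI[of _ t] exI[of _ "[]"]) simp
next
  case (2 x y)
  then obtain h us where "x = apps h us" "\<forall>x y. h \<noteq> App x y" by blast
  then show ?case by (intro exI[of _ h] exI[of _ "us @ [y]"]) simp
qed

lemma finite_spine_ssubD: "finite_spine (ssub \<sigma> t) \<Longrightarrow> finite_spine t"
proof (induction "ssub \<sigma> t" arbitrary: t rule: finite_spine.induct)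
  case 1
  then show ?case by (cases t) (auto intro: finite_spine.intros)
next
  case 2
  then show ?case by (cases t) (auto intro: finite_spine.intros)
qed

lemma finite_spine_apps_atom: "is_atom a \<Longrightarrow> finite_spine (apps a ts)"
  by (induction ts rule: rev_induct) (auto simp: is_atom_def intro: finite_spine.intros)

lemma finite_spine_Lam: "finite_spine (Lam p)"
  by (simp add: finite_spine.intros)

lemma whead_imp_finite_spine: "whead x y \<Longrightarrow> finite_spine x"
  by (induction rule: whead.induct) (auto intro: finite_spine.intros)

lemma relpowp_whead_finite_spine: "(whead ^^ j) x y \<Longrightarrow> finite_spine y \<Longrightarrow> finite_spine x"
  by (cases j) (simp, metis relpowp_Suc_D2 whead_imp_finite_spine)

section \<open>Parallel reduction\<close>

inductive par :: "'c trm \<Rightarrow> 'c trm \<Rightarrow> bool" where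
  par_refl: "par t t"
| par_App: "par s s' \<Longrightarrow> par u u' \<Longrightarrow> par (App s u) (App s' u')"
| par_Lam: "par s s' \<Longrightarrow> par (Lam s) (Lam s')"
| par_beta: "par s s' \<Longrightarrow> par u u' \<Longrightarrow> par (App (Lam s) u) (subst 0 u' s')"
| par_ssub: "par s s' \<Longrightarrow> (\<And>i. par (\<sigma> i) (\<sigma>' i)) \<Longrightarrow> par (ssub \<sigma> s) (ssub \<sigma>' s')"

lemma par_subst_0: "par s s' \<Longrightarrow> par u u' \<Longrightarrow> par (subst 0 u s) (subst 0 u' s')"
  unfolding subst_0_eq_ssub
  by (rule par_ssub) (auto simp: scons_def intro: par_refl split: nat.split)

lemma par_apps: "list_all2 par us us' \<Longrightarrow> par v v' \<Longrightarrow> par (apps v us) (apps v' us')"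
  by (induction us us' arbitrary: v v' rule: list_all2_induct) (simp_all add: apps_Cons par_App)

lemma par_up: "(\<And>i. par (\<sigma> i) (\<sigma>' i)) \<Longrightarrow> par (up \<sigma> i) (up \<sigma>' i)"
  by (cases i) (simp_all add: par_refl par_ssub)

lemma beta_imp_par: "beta s s' \<Longrightarrow> par s s'"
  by (induction rule: beta.induct) (auto intro: par.intros)

section \<open>Weak head reduction along parallel reduction\<close>

definition whead_sim :: "nat \<Rightarrow> 'c trm \<Rightarrow> 'c trm \<Rightarrow> bool" where
  "whead_sim k t t' \<longleftrightarrow>
    (\<forall>j a ts'. j \<le> k \<longrightarrow> is_atom a \<longrightarrow> (whead ^^ j) t' (apps a ts') \<longrightarrow>
       (\<exists>ts. whead\<^sup>*\<^sup>* t (apps a ts) \<and> list_all2 par ts ts')) \<and>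
    (\<forall>j p'. j \<le> k \<longrightarrow> (whead ^^ j) t' (Lam p') \<longrightarrow> (\<exists>p. whead\<^sup>*\<^sup>* t (Lam p) \<and> par p p'))"

lemma whead_simD_apps:
  "whead_sim k t t' \<Longrightarrow> j \<le> k \<Longrightarrow> is_atom a \<Longrightarrow> (whead ^^ j) t' (apps a ts') \<Longrightarrow>
    \<exists>ts. whead\<^sup>*\<^sup>* t (apps a ts) \<and> list_all2 par ts ts'"
  unfolding whead_sim_def by blast

lemma whead_simD_Lam:
  "whead_sim k t t' \<Longrightarrow> j \<le> k \<Longrightarrow> (whead ^^ j) t' (Lam p') \<Longrightarrow>
    \<exists>p. whead\<^sup>*\<^sup>* t (Lam p) \<and> par p p'"
  unfolding whead_sim_def by blast

lemma whead_sim_Lam: "par s s' \<Longrightarrow> whead_sim k (Lam s) (Lam s')"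
  unfolding whead_sim_def
  using apps_atom_neq_Lam by (fastforce dest!: relpowp_whead_normal[OF _ not_whead_Lam])

lemma whead_sim_atom: "is_atom a \<Longrightarrow> whead_sim k a a"
  using relpowp_whead_normal[OF _ not_whead_apps_atom[of a "[]"]]
  unfolding whead_sim_def
  by (fastforce simp: is_atom_def list_all2_refl par_refl)

lemma whead_sim_whead: "whead t u \<Longrightarrow> whead_sim k u t' \<Longrightarrow> whead_sim k t t'"
  unfolding whead_sim_def by (meson converse_rtranclp_into_rtranclp)

lemma whead_sim_not_finite_spine: "\<not> finite_spine t' \<Longrightarrow> whead_sim k t t'"
  unfolding whead_sim_def
  using relpowp_whead_finite_spine finite_spine_apps_atom finite_spine_Lam by blast

lemma whead_sim_apps_redex:
  fixes v :: "'c trm"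
  assumes IH: "\<forall>m<k. \<forall>x x' :: 'c trm. par x x' \<longrightarrow> whead_sim m x x'"
    and sim: "whead_sim k v v'" and pars: "list_all2 par us (u' # us')"
    and "i < j" "j \<le> k" and red: "(whead ^^ i) v' (Lam p')"
  shows "\<exists>x. whead\<^sup>*\<^sup>* (apps v us) x \<and> whead_sim (j - i - 1) x (apps (subst 0 u' p') us')"
proof -
  from \<open>i < j\<close> \<open>j \<le> k\<close> have "i \<le> k" "j - i - 1 < k" by simp_all
  from whead_simD_Lam[OF sim \<open>i \<le> k\<close> red] obtain p where p: "whead\<^sup>*\<^sup>* v (Lam p)" "par p p'"
    by blast
  from pars obtain u rest where us: "us = u # rest" "par u u'" "list_all2 par rest us'"
    by (auto simp: list_all2_Cons2)
  have "whead\<^sup>*\<^sup>* (apps v us) (apps (Lam p) us)"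
    using p(1) by (rule wheads_apps)
  moreover have "whead (apps (Lam p) us) (apps (subst 0 u p) rest)"
    unfolding us(1) apps_Cons by (rule whead_apps) (rule whead.intros)
  ultimately have "whead\<^sup>*\<^sup>* (apps v us) (apps (subst 0 u p) rest)" ..
  moreover have "par (apps (subst 0 u p) rest) (apps (subst 0 u' p') us')"
    using us(3) par_subst_0[OF p(2) us(2)] by (rule par_apps)
  ultimately show ?thesis using IH \<open>j - i - 1 < k\<close> by blast
qed

lemma whead_sim_apps_to_apps:
  fixes v :: "'c trm"
  assumes IH: "\<forall>m<k. \<forall>x x' :: 'c trm. par x x' \<longrightarrow> whead_sim m x x'"
    and sim: "whead_sim k v v'" and pars: "list_all2 par us us'"
    and "j \<le> k" and a: "is_atom a" and red: "(whead ^^ j) (apps v' us') (apps a ts')"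
  shows "\<exists>ts. whead\<^sup>*\<^sup>* (apps v us) (apps a ts) \<and> list_all2 par ts ts'"
  using relpowp_whead_apps_cases[OF red]
proof (elim disjE exE conjE)
  fix t0 assume t0: "(whead ^^ j) v' t0" "apps a ts' = apps t0 us'"
  from apps_atom_eq_appsD[OF a t0(2)] obtain vs' where vs': "t0 = apps a vs'" "ts' = vs' @ us'"
    by blast
  from whead_simD_apps[OF sim \<open>j \<le> k\<close> a] t0(1) vs'(1) obtain vs
    where vs: "whead\<^sup>*\<^sup>* v (apps a vs)" "list_all2 par vs vs'"
    by blast
  have "whead\<^sup>*\<^sup>* (apps v us) (apps a (vs @ us))"
    using wheads_apps[OF vs(1)] by (simp add: apps_apps)
  moreover have "list_all2 par (vs @ us) ts'"
    using vs(2) pars vs'(2) by (simp add: list_all2_appendI)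
  ultimately show ?thesis by blast
next
  fix i p' u' rest' assume "i < j" "us' = u' # rest'" "(whead ^^ i) v' (Lam p')"
    and rest: "(whead ^^ (j - i - 1)) (apps (subst 0 u' p') rest') (apps a ts')"
  with whead_sim_apps_redex[OF IH sim] pars \<open>j \<le> k\<close> obtain x where
    "whead\<^sup>*\<^sup>* (apps v us) x" "whead_sim (j - i - 1) x (apps (subst 0 u' p') rest')"
    by blast
  with whead_simD_apps[OF _ order_refl a rest] show ?thesis
    by (meson rtranclp_trans)
qed

lemma whead_sim_apps_to_Lam:
  fixes v :: "'c trm"
  assumes IH: "\<forall>m<k. \<forall>x x' :: 'c trm. par x x' \<longrightarrow> whead_sim m x x'"
    and sim: "whead_sim k v v'" and pars: "list_all2 par us us'"
    and "j \<le> k" and red: "(whead ^^ j) (apps v' us') (Lam p')"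
  shows "\<exists>p. whead\<^sup>*\<^sup>* (apps v us) (Lam p) \<and> par p p'"
  using relpowp_whead_apps_cases[OF red]
proof (elim disjE exE conjE)
  fix t0 assume "(whead ^^ j) v' t0" "Lam p' = apps t0 us'"
  moreover from this(2) have "us' = []" by (cases us') (simp_all add: eq_commute[of "Lam p'"])
  moreover from this pars have "us = []" by simp
  ultimately show ?thesis using whead_simD_Lam[OF sim \<open>j \<le> k\<close>] by simp
next
  fix i p'' u' rest' assume "i < j" "us' = u' # rest'" "(whead ^^ i) v' (Lam p'')"
    and rest: "(whead ^^ (j - i - 1)) (apps (subst 0 u' p'') rest') (Lam p')"
  with whead_sim_apps_redex[OF IH sim] pars \<open>j \<le> k\<close> obtain x where
    "whead\<^sup>*\<^sup>* (apps v us) x" "whead_sim (j - i - 1) x (apps (subst 0 u' p'') rest')"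
    by blast
  with whead_simD_Lam[OF _ order_refl rest] show ?thesis
    by (meson rtranclp_trans)
qed

lemma whead_sim_apps:
  fixes v :: "'c trm"
  assumes "\<forall>m<k. \<forall>x x' :: 'c trm. par x x' \<longrightarrow> whead_sim m x x'"
    and "whead_sim k v v'" and "list_all2 par us us'"
  shows "whead_sim k (apps v us) (apps v' us')"
  unfolding whead_sim_def
  using whead_sim_apps_to_apps[OF assms] whead_sim_apps_to_Lam[OF assms] by blast

lemma whead_sim_ssub_same:
  fixes t :: "'c trm"
  assumes IH: "\<forall>m<k. \<forall>x x' :: 'c trm. par x x' \<longrightarrow> whead_sim m x x'"
    and pars: "\<And>i. par (\<sigma> i) (\<sigma>' i)" and sims: "\<And>i. whead_sim k (\<sigma> i) (\<sigma>' i)"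
  shows "whead_sim k (ssub \<sigma> t) (ssub \<sigma>' t)"
proof (cases "finite_spine t")
  case False
  then show ?thesis by (blast intro: whead_sim_not_finite_spine dest: finite_spine_ssubD)
next
  case True
  then obtain h us where t: "t = apps h us" and h: "\<forall>x y. h \<noteq> App x y"
    using finite_spine_imp_apps by blast
  have "whead_sim k (ssub \<sigma> h) (ssub \<sigma>' h)"
  proof (cases h)
    case (Lam p)
    have "par (ssub (up \<sigma>) p) (ssub (up \<sigma>') p)"
      by (intro par_ssub par_refl par_up pars)
    with Lam show ?thesis by (simp add: whead_sim_Lam)
  qed (use h sims in \<open>auto simp: whead_sim_atom is_atom_def\<close>)
  moreover have "list_all2 par (map (ssub \<sigma>) us) (map (ssub \<sigma>') us)"
    by (simp add: list_all2_map1 list_all2_map2 list_all2_refl par_ssub par_refl pars)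
  ultimately show ?thesis
    unfolding t ssub_apps by (rule whead_sim_apps[OF IH])
qed

text \<open>Generalised over the substitutions so that in the \<beta>-case the contracted argument
  can be pushed into them.\<close>

lemma whead_sim_ssub:
  fixes s :: "'c trm"
  assumes IH: "\<forall>m<k. \<forall>x x' :: 'c trm. par x x' \<longrightarrow> whead_sim m x x'"
    and "par s s'"
  shows "(\<And>i. par (\<sigma> i) (\<sigma>' i)) \<Longrightarrow> (\<And>i. whead_sim k (\<sigma> i) (\<sigma>' i)) \<Longrightarrow>
    whead_sim k (ssub \<sigma> s) (ssub \<sigma>' s')"
  using \<open>par s s'\<close>
proof (induction s s' arbitrary: \<sigma> \<sigma>' rule: par.induct)
  case (par_refl t)
  then show ?case by (rule whead_sim_ssub_same[OF IH])
next
  case (par_App s s' u u')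
  have "whead_sim k (apps (ssub \<sigma> s) [ssub \<sigma> u]) (apps (ssub \<sigma>' s') [ssub \<sigma>' u'])"
    using par_App by (intro whead_sim_apps[OF IH]) (simp_all add: par_ssub)
  then show ?case by (simp add: apps_Cons)
next
  case (par_Lam s s')
  then show ?case by (simp add: whead_sim_Lam par_ssub par_up)
next
  case (par_beta s s' u u')
  have "whead_sim k (ssub (scons (ssub \<sigma> u) \<sigma>) s) (ssub (scons (ssub \<sigma>' u') \<sigma>') s')"
    using par_beta by (intro par_beta.IH(1)) (auto simp: scons_def par_ssub split: nat.split)
  then have "whead_sim k (subst 0 (ssub \<sigma> u) (ssub (up \<sigma>) s)) (ssub \<sigma>' (subst 0 u' s'))"
    by (simp add: subst_0_ssub_up ssub_subst_0)
  moreover have "whead (ssub \<sigma> (App (Lam s) u)) (subst 0 (ssub \<sigma> u) (ssub (up \<sigma>) s))"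
    by (simp add: whead.intros)
  ultimately show ?case by (rule whead_sim_whead[rotated])
next
  case (par_ssub s s' \<rho> \<rho>')
  then show ?case
    unfolding ssub_ssub by (intro par_ssub.IH(1)) (auto intro: par.par_ssub)
qed

lemma par_imp_whead_sim: "par t t' \<Longrightarrow> whead_sim k t t'"
proof (induction k arbitrary: t t' rule: less_induct)
  case (less k)
  have "whead_sim k (ssub Var t) (ssub Var t')"
    using less by (intro whead_sim_ssub) (auto intro: par_refl whead_sim_atom simp: is_atom_def)
  then show ?case by (simp add: ssub_Var)
qed

lemma wheads_imp_heads: "whead\<^sup>*\<^sup>* x y \<Longrightarrow> head\<^sup>*\<^sup>* x y"
  by (induction rule: rtranclp_induct) (auto intro: rtranclp.rtrancl_into_rtrancl head.intros)

lemma heads_Lam: "head\<^sup>*\<^sup>* x y \<Longrightarrow> head\<^sup>*\<^sup>* (Lam x) (Lam y)"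
  by (induction rule: rtranclp_induct) (auto intro: rtranclp.rtrancl_into_rtrancl head.intros)

lemma wheads_Lam: "whead\<^sup>*\<^sup>* (Lam x) y \<Longrightarrow> y = Lam x"
  by (induction rule: rtranclp_induct) (auto simp: not_whead_Lam)

lemma heads_Lam_cases: "head\<^sup>*\<^sup>* (Lam x) y \<Longrightarrow> \<exists>y'. y = Lam y' \<and> head\<^sup>*\<^sup>* x y'"
proof (induction rule: rtranclp_induct)
  case (step y z)
  then obtain y' where "y = Lam y'" "head\<^sup>*\<^sup>* x y'" by blast
  with step.hyps(2) show ?case
    by (auto elim: head.cases simp: not_whead_Lam intro: rtranclp.rtrancl_into_rtrancl)
qed simp

lemma heads_imp_wheads: "head\<^sup>*\<^sup>* x y \<Longrightarrow> (\<And>p. y \<noteq> Lam p) \<Longrightarrow> whead\<^sup>*\<^sup>* x y"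
proof (induction rule: converse_rtranclp_induct)
  case (step x x')
  from step.hyps(1) show ?case
  proof (cases rule: head.cases)
    case 1
    with step show ?thesis by (auto intro: converse_rtranclp_into_rtranclp)
  next
    case (2 s s')
    with step heads_Lam_cases show ?thesis by blast
  qed
qed simp

lemma heads_Lam_split:
  "head\<^sup>*\<^sup>* x (Lam z) \<Longrightarrow> \<exists>p. whead\<^sup>*\<^sup>* x (Lam p) \<and> head\<^sup>*\<^sup>* p z"
proof (induction rule: converse_rtranclp_induct)
  case (step x x')
  then obtain p where p: "whead\<^sup>*\<^sup>* x' (Lam p)" "head\<^sup>*\<^sup>* p z" by blast
  from step.hyps(1) show ?case
  proof (cases rule: head.cases)
    case 1
    with p show ?thesis by (auto intro: converse_rtranclp_into_rtranclp)
  next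
    case (2 s s')
    with p wheads_Lam have "p = s'" by blast
    with 2 p(2) show ?thesis by (auto intro: converse_rtranclp_into_rtranclp)
  qed
qed auto

lemma par_heads_hnf:
  assumes "par x y" "head\<^sup>*\<^sup>* y (lams n (apps a ts'))" "is_atom a"
  shows "\<exists>ts. head\<^sup>*\<^sup>* x (lams n (apps a ts))"
  using assms(1,2)
proof (induction n arbitrary: x y ts')
  case 0
  with apps_atom_neq_Lam[OF \<open>is_atom a\<close>] have "whead\<^sup>*\<^sup>* y (apps a ts')"
    by (auto intro: heads_imp_wheads)
  then obtain j where "(whead ^^ j) y (apps a ts')"
    by (blast dest: rtranclp_imp_relpowp)
  with par_imp_whead_sim[OF \<open>par x y\<close>] \<open>is_atom a\<close> obtain ts where "whead\<^sup>*\<^sup>* x (apps a ts)"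
    by (blast dest: whead_simD_apps)
  then show ?case by (auto dest: wheads_imp_heads)
next
  case (Suc n)
  then obtain p' where p': "whead\<^sup>*\<^sup>* y (Lam p')" "head\<^sup>*\<^sup>* p' (lams n (apps a ts'))"
    by (auto dest: heads_Lam_split)
  from p'(1) obtain j where "(whead ^^ j) y (Lam p')"
    by (blast dest: rtranclp_imp_relpowp)
  with par_imp_whead_sim[OF \<open>par x y\<close>] obtain p where p: "whead\<^sup>*\<^sup>* x (Lam p)" "par p p'"
    by (blast dest: whead_simD_Lam)
  from Suc.IH[OF p(2) p'(2)] obtain ts where "head\<^sup>*\<^sup>* p (lams n (apps a ts))" by blast
  with p(1) have "head\<^sup>*\<^sup>* x (lams (Suc n) (apps a ts))"
    by (auto dest: wheads_imp_heads heads_Lam intro: rtranclp_trans)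
  then show ?case ..
qed

definition has_head_hnf :: "'c \<Rightarrow> 'c trm \<Rightarrow> bool" where
  "has_head_hnf bt t \<longleftrightarrow> (\<exists>n a ts. is_atom a \<and> a \<noteq> Cst bt \<and> head\<^sup>*\<^sup>* t (lams n (apps a ts)))"

lemma has_hnf_imp_has_head_hnf:
  assumes "has_hnf bt t"
  shows "has_head_hnf bt t"
proof -
  from assms obtain n a ts' where t: "beta\<^sup>*\<^sup>* t (lams n (apps a ts'))"
    and a: "is_atom a" "a \<noteq> Cst bt"
    unfolding has_hnf_def is_hnf_def by blast
  from t have "\<exists>ts. head\<^sup>*\<^sup>* t (lams n (apps a ts))"
  proof (induction rule: converse_rtranclp_induct)
    case (step y z)
    then show ?case using par_heads_hnf[OF beta_imp_par _ a(1)] by blast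
  qed blast
  with a show ?thesis unfolding has_head_hnf_def by blast
qed

section \<open>The Boehm tree\<close>

text \<open>The default (0, Cst bt, []) encodes \<bottom> for terms without head normal form.\<close>

definition hnf_data :: "'c \<Rightarrow> 'c trm \<Rightarrow> nat \<times> 'c trm \<times> 'c trm list" where
  "hnf_data bt t = (if has_head_hnf bt t
     then SOME (n, a, ts). is_atom a \<and> a \<noteq> Cst bt \<and> head\<^sup>*\<^sup>* t (lams n (apps a ts))
     else (0, Cst bt, []))"

lemma hnf_data_has_head_hnf:
  assumes "has_head_hnf bt t" "hnf_data bt t = (n, a, ts)"
  shows "is_atom a \<and> a \<noteq> Cst bt \<and> head\<^sup>*\<^sup>* t (lams n (apps a ts))"
proof -
  let ?P = "\<lambda>(n, a, ts). is_atom a \<and> a \<noteq> Cst bt \<and> head\<^sup>*\<^sup>* t (lams n (apps a ts))"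
  from assms(1) obtain n' a' ts' where "?P (n', a', ts')"
    unfolding has_head_hnf_def by blast
  then have "?P (SOME d. ?P d)"
    by (rule someI)
  with assms show ?thesis
    by (simp add: hnf_data_def)
qed

text \<open>The state (n, a, ts) stands for lams n (apps a ts) with the ts still to be unfolded.\<close>

primcorec bohm_unfold :: "'c \<Rightarrow> nat \<times> 'c trm \<times> 'c trm list \<Rightarrow> 'c trm" where
  "bohm_unfold bt d = (case d of (n, a, ts) \<Rightarrow>
     if n \<noteq> 0 then Lam (bohm_unfold bt (n - 1, a, ts))
     else if ts = [] then a
     else App (bohm_unfold bt (0, a, butlast ts)) (bohm_unfold bt (hnf_data bt (last ts))))"

definition bohm_tree :: "'c \<Rightarrow> 'c trm \<Rightarrow> 'c trm" where
  "bohm_tree bt t = bohm_unfold bt (hnf_data bt t)"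

lemma bohm_unfold_Suc: "bohm_unfold bt (Suc n, a, ts) = Lam (bohm_unfold bt (n, a, ts))"
  and bohm_unfold_Nil: "bohm_unfold bt (0, a, []) = a"
  and bohm_unfold_snoc:
    "bohm_unfold bt (0, a, ts @ [u]) = App (bohm_unfold bt (0, a, ts)) (bohm_tree bt u)"
  by (subst bohm_unfold.code; simp add: bohm_tree_def)+

lemma bohm_unfold_eq: "bohm_unfold bt (n, a, ts) = lams n (apps a (map (bohm_tree bt) ts))"
proof (induction n)
  case 0
  show ?case
    by (induction ts rule: rev_induct) (simp_all add: bohm_unfold_Nil bohm_unfold_snoc)
qed (simp add: bohm_unfold_Suc)

lemma infN_bohm_tree: "infN bt t (bohm_tree bt t)"
proof (coinduction arbitrary: t rule: infN.coinduct)
  case infN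
  show ?case
  proof (cases "has_head_hnf bt t")
    case True
    obtain n a ts where d: "hnf_data bt t = (n, a, ts)" by (cases "hnf_data bt t") auto
    with True have "is_atom a" "a \<noteq> Cst bt" "head\<^sup>*\<^sup>* t (lams n (apps a ts))"
      by (auto dest: hnf_data_has_head_hnf)
    moreover have "bohm_tree bt t = lams n (apps a (map (bohm_tree bt) ts))"
      by (simp add: bohm_tree_def d bohm_unfold_eq)
    moreover have "list_all2 (\<lambda>u v. v = bohm_tree bt u) ts (map (bohm_tree bt) ts)"
      by (simp add: list_all2_map2 list_all2_refl)
    ultimately show ?thesis
      by (intro disjI2 exI conjI) (auto elim: list_all2_mono)
  next
    case False
    then have "bohm_tree bt t = Cst bt"
      by (simp add: bohm_tree_def hnf_data_def bohm_unfold_Nil)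
    with False show ?thesis by (auto dest: has_hnf_imp_has_head_hnf)
  qed
qed

theorem lemma5p37:
  fixes bt :: 'c and t :: "'c trm"
  shows "\<exists>s. infN bt t s"
  by (rule exI, rule infN_bohm_tree)

end
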